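(* Let $q>4$. For any distinct $x,y,z\in\mathbb{Z}_q$ there exists an $\mathcal{OS}_q(2)$ of period $q(q-1)/2$ if $q$ is odd, or $q(q-2)/2$ if $q$ is even, whose ring sequence has the form $[x,y,z,x,\ldots]$ (i.e. its first four terms are $x,y,z,x$). Moreover, if $x,y,z\neq 0$, then there exists an $\mathcal{OS}_q(2)$ of the same period whose ring sequence has the form $[0,x,y,z,x,\ldots]$.
   Context: For a periodic sequence $S=(s_i)$ over $\mathbb{Z}_q$ write $\mathbf{s}_n(i)=(s_i,\ldots,s_{i+n-1})$ and let $\mathbf{u}^R$ denote the reverse of a tuple. An $\mathcal{OS}_q(n)$ (orientable sequence) is a periodic sequence of period $m$ over $\mathbb{Z}_q$ such that $\mathbf{s}_n(i)=\mathbf{s}_n(j)$ implies $i\equiv j\pmod m$, and $\mathbf{s}_n(i)\neq\mathbf{s}_n(j)^R$ for all $i,j$. The ring sequence of a sequence of period $m$ is one period $[s_0,\ldots,s_{m-1}]$, listed from some starting position. *)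

theory Defs
  imports Main
begin

text \<open>A periodic sequence of period m over Z_q is represented by one period
  (its ring sequence) xs, a list of length m with entries in {0..<q};
  the sequence is s_i = xs ! (i mod m).\<close>

definition seq_at :: "nat list \<Rightarrow> nat \<Rightarrow> nat" where
  "seq_at xs i = xs ! (i mod length xs)"

definition window :: "nat list \<Rightarrow> nat \<Rightarrow> nat \<Rightarrow> nat list" where
  "window xs n i = map (\<lambda>k. seq_at xs (i + k)) [0..<n]"

definition orientable_seq :: "nat \<Rightarrow> nat \<Rightarrow> nat list \<Rightarrow> bool" where
  "orientable_seq q n xs \<longleftrightarrow>
     xs \<noteq> [] \<and> set xs \<subseteq> {0..<q} \<and>
     (\<forall>i j. window xs n i = window xs n j \<longrightarrow> i mod length xs = j mod length xs) \<and>
     (\<forall>i j. window xs n i \<noteq> rev (window xs n j))"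

end

theory Submission
  imports Defs
begin

text \<open>For n = 2 the windows of a ring sequence are the steps of the closed walk it traces
  in the complete graph on the symbols, and the sequence is orientable exactly when this walk
  is a trail: no step is a loop and no edge is traversed twice, in either direction. A trail
  through all edges of K_q (q odd), resp. of K_q minus a perfect matching (q even), beginning
  0, 1, 2, 3, 1 is built by induction from q to q + 2: at vertex 0 one splices in a closed
  trail through the two new vertices that uses every edge between an old and a new vertex,
  and also the edge between the new vertices when q is odd. The cases q = 5, 6 are explicit.
  Permuting the symbols and rotating the sequence preserve orientability and produce the
  prescribed prefixes.\<close>

definition trail_edges :: "nat list \<Rightarrow> nat set list" where
  "trail_edges xs = map (\<lambda>i. {seq_at xs i, seq_at xs (Suc i)}) [0..<length xs]"

definition closed_trail :: "nat list \<Rightarrow> bool" where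
  "closed_trail xs \<longleftrightarrow> distinct (trail_edges xs) \<and> (\<forall>e \<in> set (trail_edges xs). card e = 2)"

lemma window_2: "window xs 2 i = [seq_at xs i, seq_at xs (Suc i)]"
  by (simp add: window_def numeral_2_eq_2)

lemma seq_at_mod: "seq_at xs (i mod length xs) = seq_at xs i"
  by (simp add: seq_at_def)

lemma seq_at_Suc_mod: "seq_at xs (Suc (i mod length xs)) = seq_at xs (Suc i)"
  by (simp add: seq_at_def mod_Suc_eq)

lemma seq_at_in_set: "xs \<noteq> [] \<Longrightarrow> seq_at xs i \<in> set xs"
  by (simp add: seq_at_def)

lemma length_trail_edges [simp]: "length (trail_edges xs) = length xs"
  by (simp add: trail_edges_def)

lemma trail_edges_nth:
  "i < length xs \<Longrightarrow> trail_edges xs ! i = {seq_at xs i, seq_at xs (Suc i)}"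
  by (simp add: trail_edges_def)

lemma trail_edges_subset: "xs \<noteq> [] \<Longrightarrow> e \<in> set (trail_edges xs) \<Longrightarrow> e \<subseteq> set xs"
  by (auto simp: trail_edges_def seq_at_in_set)

lemma closed_trail_imp_orientable_seq:
  assumes "closed_trail xs" "xs \<noteq> []" "set xs \<subseteq> {0..<q}"
  shows "orientable_seq q 2 xs"
proof -
  let ?m = "length xs"
  have edge: "{seq_at xs i, seq_at xs (Suc i)} = trail_edges xs ! (i mod ?m)" for i
    using assms(2) by (simp add: trail_edges_nth seq_at_mod seq_at_Suc_mod)
  have same_edge: "i mod ?m = j mod ?m"
    if "{seq_at xs i, seq_at xs (Suc i)} = {seq_at xs j, seq_at xs (Suc j)}" for i j
  proof -
    have "distinct (trail_edges xs)" using assms(1) by (simp add: closed_trail_def)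
    then show ?thesis
      using that assms(2) unfolding edge by (simp add: nth_eq_iff_index_eq)
  qed
  have no_loop: "seq_at xs i \<noteq> seq_at xs (Suc i)" for i
  proof -
    have "trail_edges xs ! (i mod ?m) \<in> set (trail_edges xs)"
      using assms(2) by simp
    then show ?thesis
      using assms(1) unfolding closed_trail_def edge[symmetric] by fastforce
  qed
  have "i mod ?m = j mod ?m" if "window xs 2 i = window xs 2 j" for i j
    using that by (intro same_edge) (simp add: window_2)
  moreover have "window xs 2 i \<noteq> rev (window xs 2 j)" for i j
  proof
    assume rev: "window xs 2 i = rev (window xs 2 j)"
    then have "i mod ?m = j mod ?m"
      by (intro same_edge) (auto simp: window_2)
    then have "seq_at xs j = seq_at xs i"
      by (metis seq_at_mod)
    with rev show False
      using no_loop[of j] by (simp add: window_2)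
  qed
  ultimately show ?thesis
    using assms(2,3) unfolding orientable_seq_def by blast
qed

lemma seq_at_append:
  "i < length xs + length ys \<Longrightarrow>
   seq_at (xs @ ys) i = (if i < length xs then seq_at xs i else seq_at ys (i - length xs))"
  by (simp add: seq_at_def nth_append)

lemma seq_at_append_Suc:
  assumes "xs \<noteq> []" "ys \<noteq> []" "xs ! 0 = ys ! 0" "i < length xs + length ys"
  shows "seq_at (xs @ ys) (Suc i) =
    (if i < length xs then seq_at xs (Suc i) else seq_at ys (Suc (i - length xs)))"
proof -
  consider "Suc i < length xs" | "Suc i = length xs"
    | "length xs \<le> i" "Suc i < length xs + length ys" | "Suc i = length xs + length ys"
    using assms(4) by linarith
  then show ?thesis
  proof cases
    case 4
    then have "Suc (i - length xs) = length ys"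
      using assms(2) by (cases ys) auto
    with 4 show ?thesis
      using assms(1,3) by (simp add: seq_at_def nth_append)
  qed (use assms in \<open>auto simp: seq_at_def nth_append Suc_diff_le\<close>)
qed

lemma trail_edges_append:
  assumes "xs \<noteq> []" "ys \<noteq> []" "xs ! 0 = ys ! 0"
  shows "trail_edges (xs @ ys) = trail_edges xs @ trail_edges ys"
  by (rule nth_equalityI)
    (auto simp: trail_edges_def nth_append seq_at_append seq_at_append_Suc[OF assms])

lemma closed_trail_append:
  assumes "closed_trail xs" "closed_trail ys" "xs \<noteq> []" "ys \<noteq> []" "xs ! 0 = ys ! 0"
    and "set (trail_edges xs) \<inter> set (trail_edges ys) = {}"
  shows "closed_trail (xs @ ys)"
  using assms by (auto simp: closed_trail_def trail_edges_append)

text \<open>The closed trail 0, q, 1, q + 1, 2, q, 3, q + 1, ..., q - 1, q + (q - 1) mod 2, followed by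
  q + 1 if q is odd: vertex v is joined to q + v mod 2 going forward and to the other new vertex
  coming back.\<close>

definition extension_length :: "nat \<Rightarrow> nat" where
  "extension_length q = (if odd q then 2 * q + 1 else 2 * q)"

definition extension_vertex :: "nat \<Rightarrow> nat \<Rightarrow> nat" where
  "extension_vertex q i =
    (if i = 2 * q then q + 1 else if even i then i div 2 else q + i div 2 mod 2)"

definition extension :: "nat \<Rightarrow> nat list" where
  "extension q = map (extension_vertex q) [0..<extension_length q]"

lemma length_extension [simp]: "length (extension q) = extension_length q"
  by (simp add: extension_def)

lemma extension_nth_0: "0 < q \<Longrightarrow> extension q ! 0 = 0"
  by (simp add: extension_def extension_vertex_def extension_length_def)

lemma set_extension: "set (extension q) \<subseteq> {0..<q + 2}"
  by (auto simp: extension_def extension_vertex_def extension_length_def split: if_splits)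

lemma seq_at_extension:
  "0 < q \<Longrightarrow> seq_at (extension q) i = extension_vertex q (i mod extension_length q)"
  by (simp add: seq_at_def extension_def extension_length_def)

lemma extension_step_cases:
  assumes "0 < q" "i < extension_length q"
  obtains (old_new) v where "i = 2 * v" "v < q"
      "seq_at (extension q) i = v" "seq_at (extension q) (Suc i) = q + v mod 2"
  | (new_old) v where "i = Suc (2 * v)" "Suc v < q"
      "seq_at (extension q) i = q + v mod 2" "seq_at (extension q) (Suc i) = Suc v"
  | (close_even) "even q" "i = 2 * q - 1"
      "seq_at (extension q) i = q + 1" "seq_at (extension q) (Suc i) = 0"
  | (new_new) "odd q" "i = 2 * q - 1"
      "seq_at (extension q) i = q" "seq_at (extension q) (Suc i) = q + 1"
  | (close_odd) "odd q" "i = 2 * q"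
      "seq_at (extension q) i = q + 1" "seq_at (extension q) (Suc i) = 0"
proof -
  note vertex = seq_at_extension[OF assms(1)] extension_vertex_def extension_length_def
  have bound: "i < 2 * q + 1" "i = 2 * q \<Longrightarrow> odd q"
    using assms(2) by (auto simp: extension_length_def split: if_splits)
  consider v where "i = 2 * v" "v < q" | v where "i = Suc (2 * v)" "Suc v < q"
    | "i = 2 * q - 1" | "i = 2 * q" "odd q"
  proof (cases "even i")
    case True
    then obtain v where v: "i = 2 * v" ..
    then show ?thesis
      using that(1)[OF v] that(4) bound by (cases "v < q") auto
  next
    case False
    then obtain v where v: "i = Suc (2 * v)"
      using oddE by fastforce
    then show ?thesis
      using that(2)[OF v] that(3) bound by (cases "Suc v < q") auto
  qed
  then show ?thesis
  proof cases
    case 3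
    then have i: "i = Suc (2 * (q - 1))" and "Suc i = 2 * q"
      using assms(1) by simp_all
    then have "seq_at (extension q) i = q + (q - 1) mod 2"
      and "seq_at (extension q) (Suc i) = (if even q then 0 else q + 1)"
      by (simp_all add: vertex)
    moreover have "(q - 1) mod 2 = (if even q then 1 else 0)"
      using assms(1) by presburger
    ultimately show ?thesis
      using that(3,4) 3 by (cases "even q") simp_all
  qed (use that assms(1) in \<open>simp_all add: vertex\<close>)
qed

lemma closed_trail_extension:
  assumes "0 < q"
  shows "closed_trail (extension q)"
proof -
  let ?s = "seq_at (extension q)"
  have parity: "Suc v mod 2 \<noteq> v mod 2" "v mod 2 \<noteq> Suc v mod 2" for v :: nat
    by presburger+
  have no_loop: "?s i \<noteq> ?s (Suc i)" if "i < extension_length q" for i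
    using assms that by (cases rule: extension_step_cases) auto
  have "i = j" if "i < extension_length q" "j < extension_length q"
    and "{?s i, ?s (Suc i)} = {?s j, ?s (Suc j)}" for i j
    by (rule extension_step_cases[OF assms that(1)];
        rule extension_step_cases[OF assms that(2)];
        use that(3) in \<open>auto simp: doubleton_eq_iff parity\<close>)
  then have "distinct (trail_edges (extension q))"
    by (auto simp: distinct_conv_nth trail_edges_nth)
  then show ?thesis
    using no_loop by (auto simp: closed_trail_def trail_edges_def)
qed

lemma extension_edge_meets_new_vertex:
  assumes "0 < q" "e \<in> set (trail_edges (extension q))"
  shows "\<not> e \<subseteq> {0..<q}"
proof -
  obtain i where i: "i < extension_length q"
    and e: "e = {seq_at (extension q) i, seq_at (extension q) (Suc i)}"
    using assms(2) by (auto simp: trail_edges_def)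
  show ?thesis
    using assms(1) i unfolding e by (cases rule: extension_step_cases) auto
qed

lemma closed_trail_append_extension:
  assumes "0 < q" "closed_trail xs" "xs \<noteq> []" "set xs \<subseteq> {0..<q}" "xs ! 0 = 0"
  shows "closed_trail (xs @ extension q)"
proof (rule closed_trail_append[OF assms(2) closed_trail_extension[OF assms(1)] assms(3)])
  show "extension q \<noteq> []" "xs ! 0 = extension q ! 0"
    using assms(1,5) by (auto simp: extension_nth_0 extension_length_def simp flip: length_0_conv)
  show "set (trail_edges xs) \<inter> set (trail_edges (extension q)) = {}"
    using trail_edges_subset[OF assms(3)] assms(4) extension_edge_meets_new_vertex[OF assms(1)]
    by blast
qed

definition os2_period :: "nat \<Rightarrow> nat" where
  "os2_period q = (if odd q then q * (q - 1) div 2 else q * (q - 2) div 2)"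

lemma os2_period_add_2: "os2_period (q + 2) = os2_period q + extension_length q"
proof (cases "even q")
  case True
  then obtain k where "q = 2 * k" ..
  then show ?thesis
    by (cases k) (simp_all add: os2_period_def extension_length_def algebra_simps)
next
  case False
  then obtain k where "q = 2 * k + 1"
    using oddE by blast
  then show ?thesis
    by (simp add: os2_period_def extension_length_def algebra_simps)
qed

lemma ex_closed_trail_of_os2_period:
  assumes "5 \<le> q"
  shows "\<exists>xs. closed_trail xs \<and> set xs \<subseteq> {0..<q} \<and> length xs = os2_period q
    \<and> take 5 xs = [0, 1, 2, 3, 1]"
  using assms
proof (induction q rule: less_induct)
  case (less q)
  consider "q = 5" | "q = 6" | p where "q = p + 2" "5 \<le> p"
  proof -
    have "q = 5 \<or> q = 6 \<or> q = (q - 2) + 2 \<and> 5 \<le> q - 2"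
      using less.prems by linarith
    then show thesis
      using that by blast
  qed
  then show ?case
  proof cases
    case 1
    let ?xs = "[0, 1, 2, 3, 1, 4, 0, 2, 4, 3] :: nat list"
    have "closed_trail ?xs"
      by (simp add: closed_trail_def trail_edges_def seq_at_def upt_rec doubleton_eq_iff)
    then show ?thesis
      using 1 by (intro exI[of _ ?xs]) (simp add: os2_period_def)
  next
    case 2
    let ?xs = "[0, 1, 2, 3, 1, 4, 0, 2, 5, 3, 4, 5] :: nat list"
    have "closed_trail ?xs"
      by (simp add: closed_trail_def trail_edges_def seq_at_def upt_rec doubleton_eq_iff)
    then show ?thesis
      using 2 by (intro exI[of _ ?xs]) (simp add: os2_period_def)
  next
    case (3 p)
    then obtain xs where xs: "closed_trail xs" "set xs \<subseteq> {0..<p}" "length xs = os2_period p"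
      and prefix: "take 5 xs = [0, 1, 2, 3, 1]"
      using less.IH[of p] by auto
    have "5 \<le> length xs"
      using arg_cong[OF prefix, of length] by simp
    have "xs ! 0 = 0"
      using prefix nth_take[of 0 5 xs] by simp
    have "closed_trail (xs @ extension p)"
    proof (rule closed_trail_append_extension[OF _ xs(1) _ xs(2) \<open>xs ! 0 = 0\<close>])
      show "0 < p" "xs \<noteq> []"
        using 3(2) \<open>5 \<le> length xs\<close> by auto
    qed
    moreover have "set (xs @ extension p) \<subseteq> {0..<q}"
      using 3(1) xs(2) set_extension[of p] by auto
    moreover have "length (xs @ extension p) = os2_period q"
      using 3(1) xs(3) os2_period_add_2[of p] by simp
    moreover have "take 5 (xs @ extension p) = [0, 1, 2, 3, 1]"
      using prefix \<open>5 \<le> length xs\<close> by simp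
    ultimately show ?thesis
      by blast
  qed
qed

lemma seq_at_rotate:
  assumes "xs \<noteq> []"
  shows "seq_at (rotate k xs) i = seq_at xs (k + i)"
proof -
  have "rotate k xs ! (i mod length xs) = xs ! ((k + i mod length xs) mod length xs)"
    using assms by (intro nth_rotate) simp
  also have "(k + i mod length xs) mod length xs = (k + i) mod length xs"
    by (rule mod_add_right_eq)
  finally show ?thesis
    by (simp add: seq_at_def)
qed

lemma window_rotate:
  "xs \<noteq> [] \<Longrightarrow> window (rotate k xs) n i = window xs n (k + i)"
  by (simp add: window_def seq_at_rotate add.assoc)

text \<open>In the two lemmas below the assumption orientable_seq is unfolded with blast: handed
  to the simplifier, its injectivity clause rewrites window equations back and forth forever.\<close>

lemma orientable_seq_rotate:
  assumes "orientable_seq q n xs"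
  shows "orientable_seq q n (rotate k xs)"
proof -
  have ne: "xs \<noteq> []" and set_xs: "set xs \<subseteq> {0..<q}"
    and inj: "\<And>i j. window xs n i = window xs n j \<Longrightarrow> i mod length xs = j mod length xs"
    and no_rev: "\<And>i j. window xs n i \<noteq> rev (window xs n j)"
    using assms unfolding orientable_seq_def by blast+
  have "i mod length (rotate k xs) = j mod length (rotate k xs)"
    if "window (rotate k xs) n i = window (rotate k xs) n j" for i j
  proof -
    have "(k + i) mod length xs = (k + j) mod length xs"
      using that by (intro inj) (simp only: window_rotate[OF ne])
    then show ?thesis
      by (simp add: nat_mod_eq_iff)
  qed
  moreover have "window (rotate k xs) n i \<noteq> rev (window (rotate k xs) n j)" for i j
    unfolding window_rotate[OF ne] by (rule no_rev)
  moreover have "rotate k xs \<noteq> []" "set (rotate k xs) \<subseteq> {0..<q}"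
    using ne set_xs by simp_all
  ultimately show ?thesis
    unfolding orientable_seq_def by blast
qed

lemma window_map:
  "xs \<noteq> [] \<Longrightarrow> window (map f xs) n i = map f (window xs n i)"
  by (simp add: window_def seq_at_def)

lemma set_window: "xs \<noteq> [] \<Longrightarrow> set (window xs n i) \<subseteq> set xs"
  by (auto simp: window_def seq_at_in_set)

lemma orientable_seq_map:
  assumes "orientable_seq q n xs" "inj_on f {0..<q}" "f ` {0..<q} \<subseteq> {0..<q'}"
  shows "orientable_seq q' n (map f xs)"
proof -
  have ne: "xs \<noteq> []" and set_xs: "set xs \<subseteq> {0..<q}"
    and inj: "\<And>i j. window xs n i = window xs n j \<Longrightarrow> i mod length xs = j mod length xs"
    and no_rev: "\<And>i j. window xs n i \<noteq> rev (window xs n j)"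
    using assms(1) unfolding orientable_seq_def by blast+
  have map_eq: "map f u = map f v \<longleftrightarrow> u = v" if "set u \<subseteq> set xs" "set v \<subseteq> set xs" for u v
    using that set_xs by (intro inj_on_map_eq_map inj_on_subset[OF assms(2)]) auto
  have "i mod length (map f xs) = j mod length (map f xs)"
    if "window (map f xs) n i = window (map f xs) n j" for i j
  proof -
    have "window xs n i = window xs n j"
      using that ne by (simp add: window_map map_eq set_window)
    then have "i mod length xs = j mod length xs"
      by (rule inj)
    then show ?thesis
      by simp
  qed
  moreover have "window (map f xs) n i \<noteq> rev (window (map f xs) n j)" for i j
    using ne no_rev by (simp add: window_map rev_map map_eq set_window)
  moreover have "map f xs \<noteq> []" "set (map f xs) \<subseteq> {0..<q'}"
    using ne set_xs assms(3) by auto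
  ultimately show ?thesis
    unfolding orientable_seq_def by blast
qed

lemma extend_to_permutation:
  assumes "distinct ys" "set ys \<subseteq> {0..<q}"
  obtains f where "inj_on f {0..<q}" "f ` {0..<q} \<subseteq> {0..<q}" "map f [0..<length ys] = ys"
proof
  define zs where "zs = ys @ filter (\<lambda>v. v \<notin> set ys) [0..<q]"
  have "distinct zs"
    using assms(1) by (simp add: zs_def set_eq_iff)
  moreover have set_zs: "set zs = {0..<q}"
    using assms(2) by (auto simp: zs_def)
  ultimately have "length zs = q"
    using distinct_card[of zs] by simp
  show "inj_on (nth zs) {0..<q}"
    using \<open>distinct zs\<close> \<open>length zs = q\<close> by (simp add: inj_on_nth)
  show "nth zs ` {0..<q} \<subseteq> {0..<q}"
    using \<open>length zs = q\<close> set_zs nth_mem[of _ zs] by auto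
  show "map (nth zs) [0..<length ys] = ys"
    by (rule nth_equalityI) (simp_all add: zs_def nth_append)
qed

lemma ex_orientable_seq_with_prefix:
  assumes "5 \<le> q" "distinct [a, b, c, d]" "set [a, b, c, d] \<subseteq> {0..<q}"
  shows "\<exists>xs. orientable_seq q 2 xs \<and> length xs = os2_period q \<and> take 5 xs = [a, b, c, d, b]"
proof -
  obtain xs where xs: "closed_trail xs" "set xs \<subseteq> {0..<q}" "length xs = os2_period q"
    and prefix: "take 5 xs = [0, 1, 2, 3, 1]"
    using ex_closed_trail_of_os2_period[OF assms(1)] by blast
  have "xs \<noteq> []"
    using prefix by auto
  obtain f where f: "inj_on f {0..<q}" "f ` {0..<q} \<subseteq> {0..<q}"
    "map f [0..<length [a, b, c, d]] = [a, b, c, d]"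
    using extend_to_permutation[OF assms(2,3)] by blast
  then have "take 5 (map f xs) = [a, b, c, d, b]"
    by (simp add: take_map prefix upt_rec numeral_2_eq_2 numeral_3_eq_3)
  moreover have "orientable_seq q 2 (map f xs)"
    using closed_trail_imp_orientable_seq[OF xs(1) \<open>xs \<noteq> []\<close> xs(2)] f(1,2)
    by (rule orientable_seq_map)
  ultimately show ?thesis
    using xs(3) by (intro exI[of _ "map f xs"]) simp
qed

lemma take_rotate1: "n < length xs \<Longrightarrow> take n (rotate1 xs) = take n (tl xs)"
  by (cases xs) simp_all

theorem lemma3p21:
  fixes q x y z :: nat
  assumes "q > 4"
    and "x < q" "y < q" "z < q"
    and "x \<noteq> y" "y \<noteq> z" "x \<noteq> z"
  shows "(\<exists>xs. orientable_seq q 2 xs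
            \<and> length xs = (if odd q then q * (q - 1) div 2 else q * (q - 2) div 2)
            \<and> take 4 xs = [x, y, z, x])
       \<and> (x \<noteq> 0 \<and> y \<noteq> 0 \<and> z \<noteq> 0 \<longrightarrow>
           (\<exists>xs. orientable_seq q 2 xs
            \<and> length xs = (if odd q then q * (q - 1) div 2 else q * (q - 2) div 2)
            \<and> take 5 xs = [0, x, y, z, x]))"
proof -
  have "5 \<le> q"
    using assms(1) by simp
  have "\<exists>w < 4. w \<noteq> x \<and> w \<noteq> y \<and> w \<noteq> z"
    by presburger
  then obtain w where "w < 4" "w \<notin> {x, y, z}"
    by auto
  then obtain xs where xs: "orientable_seq q 2 xs" "length xs = os2_period q"
    and prefix: "take 5 xs = [w, x, y, z, x]"
    using ex_orientable_seq_with_prefix[OF \<open>5 \<le> q\<close>, of w x y z] assms by auto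
  have "4 < length xs"
    using arg_cong[OF prefix, of length] by simp
  then have "take 4 (rotate1 xs) = [x, y, z, x]"
    using prefix by (simp add: take_rotate1 take_tl)
  moreover have "orientable_seq q 2 (rotate1 xs)"
    using orientable_seq_rotate[OF xs(1), of 1] by simp
  ultimately have "\<exists>xs. orientable_seq q 2 xs \<and> length xs = os2_period q
      \<and> take 4 xs = [x, y, z, x]"
    using xs(2) by (intro exI[of _ "rotate1 xs"]) simp
  moreover have "x \<noteq> 0 \<and> y \<noteq> 0 \<and> z \<noteq> 0 \<longrightarrow> (\<exists>xs. orientable_seq q 2 xs
      \<and> length xs = os2_period q \<and> take 5 xs = [0, x, y, z, x])"
    using ex_orientable_seq_with_prefix[OF \<open>5 \<le> q\<close>, of 0 x y z] assms by auto
  ultimately show ?thesis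
    unfolding os2_period_def[symmetric] by blast
qed

end
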